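(* Let $n\ge 2$, $PS$ be strictly proper, and let $k$ be an integer with $1\le k\le k_B$. Let $(\bar\beta_\ell,\bar\beta_h)\in\mathbb R^2$ satisfy $\bar\beta_\ell\le 1$, $\bar\beta_h\le 1$ and $\bar\beta_h+\frac{P(\ell\mid \ell)}{P(h\mid \ell)}\bar\beta_\ell\ge 1$. Then $u(\bar\beta_\ell,\bar\beta_h\mid \ell)\le u(\Sigma^*\mid \ell)$, with equality only when $(\bar\beta_\ell,\bar\beta_h)=(0,1)$.
   Context: Peer prediction setting with signals $\{\ell,h\}$ and a symmetric prior. $P(s\mid s')$ denotes the probability that another agent has signal $s$ given that one's own signal is $s'$, and $P_{s'}=P(\cdot\mid s')$. Standing assumptions: $P(h\mid h)>P(h\mid\ell)$, $P(h\mid\ell)>0$ and $P(\ell\mid h)>0$. $PS$ is a strictly proper scoring rule on $\{\ell,h\}$. For $\beta'\in\mathbb R$ and $(\beta_\ell,\beta_h)\in\mathbb R^2$, let $q=P(h\mid \ell)\beta_h+P(\ell\mid \ell)\beta_\ell$ and define $$f^\ell(\beta',(\beta_\ell,\beta_h))=\beta'\big[q\,PS(h,P_h)+(1-q)PS(\ell,P_h)\big]+(1-\beta')\big[q\,PS(h,P_\ell)+(1-q)PS(\ell,P_\ell)\big].$$ Define $$u(\bar\beta_\ell,\bar\beta_h\mid \ell)=\tfrac{n-k}{n-1}f^\ell(\bar\beta_\ell,(0,1))+\tfrac{k-1}{n-1}f^\ell(\bar\beta_\ell,(\bar\beta_\ell,\bar\beta_h)).$$ This is the interim utility of a signal-$\ell$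 deviator when $k$ deviators all play $(\bar\beta_\ell,\bar\beta_h)$, i.e. report $h$ with probability $\bar\beta_\ell$ given signal $\ell$ and with probability $\bar\beta_h$ given signal $h$, and the remaining $n-k$ agents report truthfully. The truthful interim utility is $u(\Sigma^*\mid \ell)=P(h\mid \ell)PS(h,P_\ell)+P(\ell\mid \ell)PS(\ell,P_\ell)$. $k_B=\min(k_B^h,k_B^\ell,n)$, where $k_B^h=\lceil (n-1)\mathbb E_{s\sim P_\ell}[PS(s,P_\ell)-PS(s,P_h)]/(P(\ell\mid\ell)(PS(h,P_h)-PS(\ell,P_h)))\rceil$ if $PS(h,P_h)>PS(\ell,P_h)$ and $k_B^h=n$ otherwise; and $k_B^\ell=\lceil (n-1)\mathbb E_{s\sim P_h}[PS(s,P_h)-PS(s,P_\ell)]/(P(h\mid h)(PS(\ell,P_\ell)-PS(h,P_\ell)))\rceil$ if $PS(\ell,P_\ell)>PS(h,P_\ell)$ and $k_B^\ell=n$ otherwise. *)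

theory Defs
  imports Complex_Main
begin

datatype sig = L | H

definition is_dist :: "(sig \<Rightarrow> real) \<Rightarrow> bool" where
  "is_dist p \<longleftrightarrow> p L \<ge> 0 \<and> p H \<ge> 0 \<and> p L + p H = 1"

definition exp_score :: "(sig \<Rightarrow> (sig \<Rightarrow> real) \<Rightarrow> real) \<Rightarrow> (sig \<Rightarrow> real) \<Rightarrow> (sig \<Rightarrow> real) \<Rightarrow> real" where
  "exp_score PS p q = p L * PS L q + p H * PS H q"

definition strictly_proper :: "(sig \<Rightarrow> (sig \<Rightarrow> real) \<Rightarrow> real) \<Rightarrow> bool" where
  "strictly_proper PS \<longleftrightarrow>
     (\<forall>p q. is_dist p \<longrightarrow> is_dist q \<longrightarrow> p \<noteq> q \<longrightarrow> exp_score PS p q < exp_score PS p p)"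

(* Pc s s' = P(s | s'); the posterior P_{s'} *)
definition post :: "(sig \<Rightarrow> sig \<Rightarrow> real) \<Rightarrow> sig \<Rightarrow> sig \<Rightarrow> real" where
  "post Pc s' = (\<lambda>s. Pc s s')"

definition f_l :: "(sig \<Rightarrow> sig \<Rightarrow> real) \<Rightarrow> (sig \<Rightarrow> (sig \<Rightarrow> real) \<Rightarrow> real)
                   \<Rightarrow> real \<Rightarrow> real \<Rightarrow> real \<Rightarrow> real" where
  "f_l Pc PS b' bl bh =
     (let q = Pc H L * bh + Pc L L * bl in
       b' * (q * PS H (post Pc H) + (1 - q) * PS L (post Pc H))
       + (1 - b') * (q * PS H (post Pc L) + (1 - q) * PS L (post Pc L)))"

definition u_dev_l :: "(sig \<Rightarrow> sig \<Rightarrow> real) \<Rightarrow> (sig \<Rightarrow> (sig \<Rightarrow> real) \<Rightarrow> real)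
                   \<Rightarrow> nat \<Rightarrow> nat \<Rightarrow> real \<Rightarrow> real \<Rightarrow> real" where
  "u_dev_l Pc PS n k bl bh =
     (real n - real k) / (real n - 1) * f_l Pc PS bl 0 1
     + (real k - 1) / (real n - 1) * f_l Pc PS bl bl bh"

definition u_truth_l :: "(sig \<Rightarrow> sig \<Rightarrow> real) \<Rightarrow> (sig \<Rightarrow> (sig \<Rightarrow> real) \<Rightarrow> real) \<Rightarrow> real" where
  "u_truth_l Pc PS = Pc H L * PS H (post Pc L) + Pc L L * PS L (post Pc L)"

definition kB_h :: "(sig \<Rightarrow> sig \<Rightarrow> real) \<Rightarrow> (sig \<Rightarrow> (sig \<Rightarrow> real) \<Rightarrow> real) \<Rightarrow> nat \<Rightarrow> int" where
  "kB_h Pc PS n =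
     (if PS H (post Pc H) > PS L (post Pc H) then
        \<lceil>(real n - 1) * (exp_score PS (post Pc L) (post Pc L) - exp_score PS (post Pc L) (post Pc H))
           / (Pc L L * (PS H (post Pc H) - PS L (post Pc H)))\<rceil>
      else int n)"

definition kB_l :: "(sig \<Rightarrow> sig \<Rightarrow> real) \<Rightarrow> (sig \<Rightarrow> (sig \<Rightarrow> real) \<Rightarrow> real) \<Rightarrow> nat \<Rightarrow> int" where
  "kB_l Pc PS n =
     (if PS L (post Pc L) > PS H (post Pc L) then
        \<lceil>(real n - 1) * (exp_score PS (post Pc H) (post Pc H) - exp_score PS (post Pc H) (post Pc L))
           / (Pc H H * (PS L (post Pc L) - PS H (post Pc L)))\<rceil>
      else int n)"

definition kB :: "(sig \<Rightarrow> sig \<Rightarrow> real) \<Rightarrow> (sig \<Rightarrow> (sig \<Rightarrow> real) \<Rightarrow> real) \<Rightarrow> nat \<Rightarrow> int" where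
  "kB Pc PS n = min (kB_h Pc PS n) (min (kB_l Pc PS n) (int n))"

end

theory Submission
  imports Defs
begin

(* Write X and Y for the extra score a peer's report h earns under the posteriors P_h and P_l,
   and D > 0 for the expected loss of a signal-l agent who predicts P_h instead of P_l.
   Expanding the scores, a deviator loses bl * D and gains c * (q - P(h|l)) * E, where
   c = (k - 1)/(n - 1), q is the probability that a fellow deviator reports h, and E is a convex
   combination of X and Y. Strict properness gives Y < X, so E <= max X 0, and the cone
   condition together with bh <= 1 gives 0 <= q - P(h|l) <= P(l|l) * bl. The gain is therefore
   at most bl * c * P(l|l) * max X 0, and k <= kB_h says precisely that c * P(l|l) * X < D. *)

definition h_bonus :: "(sig \<Rightarrow> (sig \<Rightarrow> real) \<Rightarrow> real) \<Rightarrow> (sig \<Rightarrow> real) \<Rightarrow> real" where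
  "h_bonus PS p = PS H p - PS L p"

definition score_divergence ::
    "(sig \<Rightarrow> (sig \<Rightarrow> real) \<Rightarrow> real) \<Rightarrow> (sig \<Rightarrow> real) \<Rightarrow> (sig \<Rightarrow> real) \<Rightarrow> real" where
  "score_divergence PS p q = exp_score PS p p - exp_score PS p q"

lemma exp_score_eq_h_bonus:
  assumes "is_dist p"
  shows "exp_score PS p r = PS L r + p H * h_bonus PS r"
proof -
  have pL: "p L = 1 - p H" using assms by (simp add: is_dist_def)
  show ?thesis by (simp add: exp_score_def h_bonus_def pL algebra_simps)
qed

lemma strictly_proper_score_divergence_pos:
  assumes "strictly_proper PS" "is_dist p" "is_dist q" "p \<noteq> q"
  shows "score_divergence PS p q > 0"
  using assms by (simp add: strictly_proper_def score_divergence_def)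

lemma strictly_proper_h_bonus_less:
  assumes PS: "strictly_proper PS" and p: "is_dist p" and q: "is_dist q" and pq: "p H < q H"
  shows "h_bonus PS p < h_bonus PS q"
proof -
  have "p \<noteq> q" using pq by auto
  then have "score_divergence PS p q + score_divergence PS q p > 0"
    using strictly_proper_score_divergence_pos[OF PS] p q by (simp add: add_pos_pos)
  also have "score_divergence PS p q + score_divergence PS q p
      = (q H - p H) * (h_bonus PS q - h_bonus PS p)"
    by (simp add: score_divergence_def exp_score_eq_h_bonus[OF p] exp_score_eq_h_bonus[OF q]
        algebra_simps)
  finally show ?thesis using pq by (simp add: zero_less_mult_iff)
qed

lemma u_truth_l_eq_exp_score: "u_truth_l Pc PS = exp_score PS (post Pc L) (post Pc L)"
  by (simp add: u_truth_l_def exp_score_def post_def)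

lemma f_l_eq:
  assumes "is_dist (post Pc L)"
  shows "f_l Pc PS b' bl bh = u_truth_l Pc PS - b' * score_divergence PS (post Pc L) (post Pc H)
    + (Pc H L * bh + Pc L L * bl - Pc H L)
      * (b' * h_bonus PS (post Pc H) + (1 - b') * h_bonus PS (post Pc L))"
  using assms
  by (simp add: f_l_def Let_def u_truth_l_eq_exp_score score_divergence_def
      exp_score_eq_h_bonus h_bonus_def post_def algebra_simps)

lemma u_dev_l_eq:
  assumes "is_dist (post Pc L)" and "n \<ge> 2"
  shows "u_dev_l Pc PS n k bl bh = u_truth_l Pc PS - bl * score_divergence PS (post Pc L) (post Pc H)
    + (real k - 1) / (real n - 1) * ((Pc H L * bh + Pc L L * bl - Pc H L)
      * (bl * h_bonus PS (post Pc H) + (1 - bl) * h_bonus PS (post Pc L)))"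
    (is "_ = ?T - ?loss + ?c * ?gain")
proof -
  have "(real n - real k) / (real n - 1) = 1 - ?c"
    using assms(2) by (simp add: field_simps)
  moreover have "f_l Pc PS bl 0 1 = ?T - ?loss" and "f_l Pc PS bl bl bh = ?T - ?loss + ?gain"
    using f_l_eq[OF assms(1)] by simp_all
  ultimately have "u_dev_l Pc PS n k bl bh = (1 - ?c) * (?T - ?loss) + ?c * (?T - ?loss + ?gain)"
    by (simp only: u_dev_l_def)
  then show ?thesis
    by (simp add: algebra_simps)
qed

lemma kB_h_bound:
  assumes n: "n \<ge> 2" and k: "int k \<le> kB_h Pc PS n" and A: "Pc L L > 0"
    and X: "h_bonus PS (post Pc H) > 0"
  shows "(real k - 1) / (real n - 1) * Pc L L * h_bonus PS (post Pc H)
    < score_divergence PS (post Pc L) (post Pc H)"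
proof -
  define X where "X = h_bonus PS (post Pc H)"
  define D where "D = score_divergence PS (post Pc L) (post Pc H)"
  have "int k \<le> \<lceil>(real n - 1) * D / (Pc L L * X)\<rceil>"
    using k X by (simp add: kB_h_def X_def D_def h_bonus_def score_divergence_def)
  then have "real k - 1 < (real n - 1) * D / (Pc L L * X)"
    by linarith
  moreover have "Pc L L * X > 0" using A X by (simp add: X_def)
  ultimately have "(real k - 1) * (Pc L L * X) < (real n - 1) * D"
    by (simp add: pos_less_divide_eq)
  moreover have "real n - 1 > 0" using n by simp
  ultimately have "(real k - 1) / (real n - 1) * (Pc L L * X) < D"
    by (simp add: divide_less_eq mult.commute)
  then show ?thesis by (simp add: X_def D_def mult.assoc)
qed

lemma deviation_gain_le:
  fixes a A c q bl X Y :: real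
  assumes "0 \<le> c" "0 \<le> q - a" "q - a \<le> A * bl" "0 \<le> bl" "bl \<le> 1" "Y \<le> X"
  shows "c * ((q - a) * (bl * X + (1 - bl) * Y)) \<le> bl * (c * A * max X 0)"
proof -
  have "bl * X + (1 - bl) * Y \<le> max X 0"
    using assms(5,6) mult_left_mono[of Y X "1 - bl"] by (simp add: algebra_simps max_def)
  then have "(q - a) * (bl * X + (1 - bl) * Y) \<le> (q - a) * max X 0"
    using assms(2) by (rule mult_left_mono)
  also have "\<dots> \<le> A * bl * max X 0"
    using assms(3) by (rule mult_right_mono) simp
  finally show ?thesis
    using assms(1) mult_left_mono by (fastforce simp: algebra_simps)
qed

lemma deviation_gain_le_loss:
  fixes a A c bl bh X Y D :: real
  assumes a: "0 < a" and c: "0 \<le> c" and bl: "0 \<le> bl" "bl \<le> 1" and bh: "bh \<le> 1"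
    and q: "a \<le> a * bh + A * bl" and "Y \<le> X" and M: "c * A * max X 0 < D"
  defines "G \<equiv> c * ((a * bh + A * bl - a) * (bl * X + (1 - bl) * Y))"
  shows "G \<le> bl * D" and "G = bl * D \<Longrightarrow> bl = 0 \<and> bh = 1"
proof -
  have "a * bh \<le> a" using bh a by (simp add: mult_left_le)
  then have "G \<le> bl * (c * A * max X 0)"
    unfolding G_def using deviation_gain_le c q bl \<open>Y \<le> X\<close> by simp
  moreover have "bl * (c * A * max X 0) \<le> bl * D" using M bl by (simp add: mult_left_mono)
  ultimately show "G \<le> bl * D" by linarith
  assume "G = bl * D"
  with \<open>G \<le> bl * (c * A * max X 0)\<close> have "bl * (D - c * A * max X 0) \<le> 0"
    by (simp add: algebra_simps)
  then have "bl = 0" using bl M by (simp add: mult_le_0_iff)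
  then show "bl = 0 \<and> bh = 1" using q a bh by simp
qed

theorem lemma2:
  fixes Pc :: "sig \<Rightarrow> sig \<Rightarrow> real"
    and PS :: "sig \<Rightarrow> (sig \<Rightarrow> real) \<Rightarrow> real"
    and n k :: nat and bl bh :: real
  assumes dist_L: "is_dist (post Pc L)" and dist_H: "is_dist (post Pc H)"
    and inf: "Pc H H > Pc H L" and pos_hl: "Pc H L > 0" and pos_lh: "Pc L H > 0"
    and PS: "strictly_proper PS"
    and n: "n \<ge> 2"
    and k: "1 \<le> k" "int k \<le> kB Pc PS n"
    and bl: "bl \<le> 1" and bh: "bh \<le> 1"
    and cone: "bh + Pc L L / Pc H L * bl \<ge> 1"
  shows "u_dev_l Pc PS n k bl bh \<le> u_truth_l Pc PS
         \<and> (u_dev_l Pc PS n k bl bh = u_truth_l Pc PS \<longrightarrow> (bl, bh) = (0, 1))"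
proof -
  define a A c X Y D where "a = Pc H L" and "A = Pc L L"
    and "c = (real k - 1) / (real n - 1)" and "X = h_bonus PS (post Pc H)"
    and "Y = h_bonus PS (post Pc L)" and "D = score_divergence PS (post Pc L) (post Pc H)"
  have A: "A > 0" using dist_L dist_H inf by (simp add: is_dist_def post_def A_def)
  have q: "a \<le> a * bh + A * bl" using cone pos_hl by (simp add: a_def A_def field_simps)
  have "a * bh \<le> a" using bh pos_hl by (simp add: a_def mult_left_le)
  then have "0 \<le> A * bl" using q by linarith
  then have bl0: "0 \<le> bl" using A by (simp add: zero_le_mult_iff)
  have "post Pc L \<noteq> post Pc H" using inf by (metis less_irrefl post_def)
  then have D: "0 < D"
    using strictly_proper_score_divergence_pos[OF PS dist_L dist_H] by (simp add: D_def)
  have "Y < X" using strictly_proper_h_bonus_less[OF PS dist_L dist_H] inf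
    by (simp add: X_def Y_def post_def)
  have c: "0 \<le> c" using k(1) n by (simp add: c_def)
  have "c * A * max X 0 < D"
  proof (cases "X > 0")
    case True
    have "int k \<le> kB_h Pc PS n" using k(2) by (simp add: kB_def)
    with True show ?thesis
      using kB_h_bound[OF n] A by (simp add: c_def A_def X_def D_def)
  qed (simp add: D)
  note gain = deviation_gain_le_loss[OF _ c bl0 bl bh q less_imp_le[OF \<open>Y < X\<close>] this]
  have "u_dev_l Pc PS n k bl bh
      = u_truth_l Pc PS - bl * D + c * ((a * bh + A * bl - a) * (bl * X + (1 - bl) * Y))"
    using u_dev_l_eq[OF dist_L n] by (simp add: a_def A_def c_def X_def Y_def D_def)
  then show ?thesis using gain pos_hl by (auto simp: a_def)
qed

end
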